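(* Let $\{q_n\}$ be the Fibonacci Quilt sequence and, for $n,k\ge0$, let $q_{n,k}$ denote the number of integers $m\in[0,q_{n+1})$ whose Greedy-6 decomposition has exactly $k$ summands (with $0$ having the empty decomposition). Then \[q_{n,k}=\begin{cases}1 & k=0,\ n\ge0,\ \text{or } k=2,\ n=5,\\ n & k=1,\ n\ge0,\\ 1+\frac{(n-5)(n-4)}{2} & k=2,\ n\ge6,\\ q_{n-5,k-1}+q_{n-1,k} & k\ge3,\ n\ge5(k-1),\\ 0 & k\ge3,\ n<5(k-1),\ \text{or } k=2,\ n\le4,\end{cases}\] and $H(x,y)=\sum_{n\ge0}\sum_{k\ge0}q_{n,k}x^ny^k$ equals \[H(x,y)=\frac{1+(x+x^2+x^3+x^4)y+x^5y^2}{1-x-yx^5}.\]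
   Context: Here $q_{n,k}$ (two indices) is a counting function distinct from the sequence term $q_n$. Given an increasing sequence $\{q_i\}$, a decomposition $m=q_{\ell_1}+\dots+q_{\ell_t}$ with $q_{\ell_1}>\dots>q_{\ell_t}$ is FQ-legal if $|\ell_i-\ell_j|\notin\{0,1,3,4\}$ for $i\neq j$ and $\{1,3\}\not\subset\{\ell_1,\dots,\ell_t\}$. The Fibonacci Quilt sequence has $q_1=1$ and each $q_i$ ($i\ge2$) is the smallest positive integer with no FQ-legal decomposition using $q_1,\dots,q_{i-1}$ (it begins $1,2,3,4,5,7,9,12,\dots$). The Greedy-6 decomposition of a positive integer $m$: if $m=q_n$ it is $q_n$; if $m=6$ it is $q_4+q_2$; otherwise write $m=q_{\ell_1}+x$ with $q_{\ell_1}<m<q_{\ell_1+1}$, $x>0$, and iterate on $x$. *)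

theory Defs
  imports Main "HOL-Computational_Algebra.Formal_Power_Series"
begin

definition FQ_legal :: "nat set \<Rightarrow> bool" where
  "FQ_legal S \<longleftrightarrow>
     (\<forall>a\<in>S. \<forall>b\<in>S. a \<noteq> b \<longrightarrow> nat \<bar>int a - int b\<bar> \<notin> {1, 3, 4}) \<and> \<not> ({1, 3} \<subseteq> S)"

definition FQ_representable :: "(nat \<Rightarrow> nat) \<Rightarrow> nat \<Rightarrow> nat \<Rightarrow> bool" where
  "FQ_representable f i m \<longleftrightarrow>
     (\<exists>S. S \<subseteq> {1..<i} \<and> S \<noteq> {} \<and> FQ_legal S \<and> (\<Sum>l\<in>S. f l) = m)"

text \<open>fq_list i = [q_1, ..., q_i].\<close>
fun fq_list :: "nat \<Rightarrow> nat list" where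
  "fq_list 0 = []"
| "fq_list (Suc i) =
     (let L = fq_list i in
      L @ [if i = 0 then 1
           else (LEAST m. 0 < m \<and> \<not> FQ_representable (\<lambda>j. L ! (j - 1)) (Suc i) m)])"

text \<open>The Fibonacci Quilt sequence q_n (n \<ge> 1); the value at 0 is a dummy 0.\<close>
definition fq :: "nat \<Rightarrow> nat" where
  "fq n = (if n = 0 then 0 else fq_list n ! (n - 1))"

text \<open>Greedy-6 decomposition (list of indices of the summands), computed with a fuel
  parameter; since every step decreases m by at least q_1 = 1, fuel m suffices.\<close>
fun greedy6_aux :: "nat \<Rightarrow> nat \<Rightarrow> nat list" where
  "greedy6_aux 0 m = []"
| "greedy6_aux (Suc f) m =
     (if m = 0 then []
      else if (\<exists>n\<ge>1. fq n = m) then [THE n. n \<ge> 1 \<and> fq n = m]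
      else if m = 6 then [4, 2]
      else (let l = (THE l. 1 \<le> l \<and> fq l < m \<and> m < fq (Suc l))
            in l # greedy6_aux f (m - fq l)))"

definition greedy6 :: "nat \<Rightarrow> nat list" where
  "greedy6 m = greedy6_aux m m"

definition qnk :: "nat \<Rightarrow> nat \<Rightarrow> nat" where
  "qnk n k = card {m. m < fq (Suc n) \<and> length (greedy6 m) = k}"

text \<open>Bivariate generating function H(x,y) = sum q_{n,k} x^n y^k, as a power series in x
  whose coefficients are power series in y.\<close>
definition H :: "int fps fps" where
  "H = Abs_fps (\<lambda>n. Abs_fps (\<lambda>k. int (qnk n k)))"

end

theory Submission
  imports Defs
begin

text \<open>
  The Fibonacci Quilt sequence is 1, 2, 3, 4, 5, 7 continued by q(n+1) = q(n) + q(n-4).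
  To identify the greedily defined sequence fq with this recurrence one shows that every
  0 < m < q(n+1) is an FQ-legal sum of q(1), ..., q(n) (split off q(n) and recurse on the
  remainder, which is below q(n-4)), whereas an FQ-legal sum with largest index l lies in
  [q(l), q(l+3)) and never equals q(l+1) or q(l+2).

  For n \<ge> 6 and r < q(n-4), Greedy-6 decomposes q(n) + r as q(n) followed by the
  decomposition of r. Hence the integers in [q(n), q(n+1)) with k summands correspond to
  those in [0, q(n-4)) with k - 1 summands, i.e. q(n,k) = q(n-1,k) + q(n-5,k-1). The closed
  forms and the generating function follow from this recurrence and the values for n \<le> 5.
\<close>

text \<open>Like fq, this sequence takes the dummy value 0 at index 0.\<close>

fun quilt :: "nat \<Rightarrow> nat" where
  "quilt n = (if n \<le> 5 then n else if n = 6 then 7 else quilt (n - 1) + quilt (n - 5))"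

declare quilt.simps [simp del]

lemma quilt_small: "n \<le> 5 \<Longrightarrow> quilt n = n"
  by (subst quilt.simps) simp

lemma quilt_6: "quilt 6 = 7"
  by (subst quilt.simps) simp

lemma quilt_Suc: "n \<ge> 6 \<Longrightarrow> quilt (Suc n) = quilt n + quilt (n - 4)"
  by (subst quilt.simps) simp

lemma quilt_values:
  "quilt 0 = 0" "quilt 1 = 1" "quilt 2 = 2" "quilt 3 = 3" "quilt 4 = 4" "quilt 5 = 5"
  "quilt 6 = 7" "quilt 7 = 9" "quilt 8 = 12" "quilt 9 = 16"
proof -
  show small: "quilt 0 = 0" "quilt 1 = 1" "quilt 2 = 2" "quilt 3 = 3" "quilt 4 = 4"
    "quilt 5 = 5" "quilt 6 = 7"
    by (simp_all add: quilt_small quilt_6)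
  show q7: "quilt 7 = 9" using quilt_Suc[of 6] small by simp
  show q8: "quilt 8 = 12" using quilt_Suc[of 7] small q7 by simp
  show "quilt 9 = 16" using quilt_Suc[of 8] small q8 by simp
qed

lemma quilt_add3: "n \<ge> 2 \<Longrightarrow> quilt (n + 3) = quilt (n + 1) + quilt n"
proof (induction n rule: less_induct)
  case (less n)
  show ?case
  proof (cases "n \<ge> 7")
    case True
    have "quilt (n + 2) = quilt n + quilt (n - 1)"
      using less.IH[of "n - 1"] True by (simp add: numeral_eq_Suc)
    moreover have "quilt (n - 2) = quilt (n - 4) + quilt (n - 5)"
      using less.IH[of "n - 5"] True by (simp add: numeral_eq_Suc Suc_diff_Suc)
    moreover have "quilt (n + 3) = quilt (n + 2) + quilt (n - 2)"
      using quilt_Suc[of "n + 2"] True by (simp add: eval_nat_numeral)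
    moreover have "quilt (n + 1) = quilt n + quilt (n - 4)"
      using quilt_Suc[of n] True by simp
    moreover have "quilt n = quilt (n - 1) + quilt (n - 5)"
      using quilt_Suc[of "n - 1"] True by simp
    ultimately show ?thesis by simp
  next
    case False
    with less.prems have "n \<in> {2, 3, 4, 5, 6}" by auto
    then show ?thesis by (auto simp: quilt_values)
  qed
qed

lemma quilt_ge: "n \<le> quilt n"
proof (induction n rule: less_induct)
  case (less n)
  consider "n \<le> 5" | "n = 6" | "n \<ge> 7" by linarith
  then show ?case
  proof cases
    case 3
    then have "quilt n = quilt (n - 1) + quilt (n - 5)"
      using quilt_Suc[of "n - 1"] by simp
    moreover have "n - 1 \<le> quilt (n - 1)" "n - 5 \<le> quilt (n - 5)"
      using less.IH 3 by simp_all
    ultimately show ?thesis using 3 by linarith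
  qed (simp_all add: quilt_small quilt_6)
qed

lemma quilt_add3_ge: "n \<ge> 1 \<Longrightarrow> quilt n + quilt (n + 1) \<le> quilt (n + 3)"
  using quilt_add3[of n] by (cases "n = 1") (simp_all add: quilt_small)

lemma quilt_pos: "n \<ge> 1 \<Longrightarrow> quilt n > 0"
  using quilt_ge[of n] by linarith

lemma quilt_less_Suc: "quilt n < quilt (Suc n)"
proof (cases "n \<ge> 6")
  case True
  then show ?thesis using quilt_Suc[OF True] quilt_pos[of "n - 4"] by simp
next
  case False
  then show ?thesis by (cases "n = 5") (simp_all add: quilt_small quilt_6)
qed

lemma strict_mono_quilt: "strict_mono quilt"
  by (simp add: strict_mono_Suc_iff quilt_less_Suc)

lemma quilt_less_iff [simp]: "quilt a < quilt b \<longleftrightarrow> a < b"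
  using strict_mono_quilt strict_mono_less by blast

lemma quilt_le_iff [simp]: "quilt a \<le> quilt b \<longleftrightarrow> a \<le> b"
  using strict_mono_quilt strict_mono_less_eq by blast

lemma quilt_eq_iff [simp]: "quilt a = quilt b \<longleftrightarrow> a = b"
  using strict_mono_quilt strict_mono_eq by blast

lemma quilt_neq_6: "quilt n \<noteq> 6"
proof (cases "n \<le> 5")
  case False
  then have "quilt 6 \<le> quilt n" by simp
  then show ?thesis by (simp add: quilt_6)
qed (simp add: quilt_small)

lemma quilt_interval: "\<exists>n. quilt n \<le> m \<and> m < quilt (Suc n)"
proof (induction m)
  case 0
  show ?case by (rule exI[of _ 0]) (simp add: quilt_small)
next
  case (Suc m)
  then obtain n where n: "quilt n \<le> m" "m < quilt (Suc n)" by blast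
  show ?case
  proof (cases "Suc m < quilt (Suc n)")
    case True
    then show ?thesis using n by (intro exI[of _ n]) simp
  next
    case False
    then have "Suc m = quilt (Suc n)" using n by simp
    then show ?thesis using quilt_less_Suc[of "Suc n"] by (intro exI[of _ "Suc n"]) simp
  qed
qed

lemma FQ_legal_iff:
  "FQ_legal S \<longleftrightarrow> (\<forall>a\<in>S. \<forall>b\<in>S. b < a \<longrightarrow> a - b \<notin> {1, 3, 4}) \<and> \<not> {1, 3} \<subseteq> S"
proof -
  have "nat \<bar>int a - int b\<bar> = (if b \<le> a then a - b else b - a)" for a b :: nat
    by auto
  then show ?thesis
    unfolding FQ_legal_def by (metis linorder_neqE_nat nat_less_le)
qed

lemma FQ_legal_subset: "FQ_legal S \<Longrightarrow> T \<subseteq> S \<Longrightarrow> FQ_legal T"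
  unfolding FQ_legal_iff by blast

lemma FQ_legal_singleton: "FQ_legal {n}"
  unfolding FQ_legal_iff by simp

lemma FQ_legal_gap:
  assumes "FQ_legal S" "l \<in> S" "x \<in> S" "x < l"
  shows "x + 2 = l \<or> x + 5 \<le> l"
proof -
  have "l - x \<notin> {1, 3, 4}" using assms unfolding FQ_legal_iff by blast
  with \<open>x < l\<close> show ?thesis by auto
qed

lemma FQ_legal_remove_Max:
  assumes "FQ_legal S" "S \<subseteq> {1..l}" "l \<in> S"
  shows "S - {l} \<subseteq> {1..l - 2}" and "l - 2 \<notin> S \<Longrightarrow> S - {l} \<subseteq> {1..l - 5}"
  using FQ_legal_gap[OF assms(1,3)] assms(2) by fastforce+

lemma FQ_legal_insert:
  assumes "FQ_legal S" "S \<subseteq> {..m}" "m + 5 \<le> n"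
  shows "FQ_legal (insert n S)"
  unfolding FQ_legal_iff
proof (intro conjI ballI impI)
  fix a b assume ab: "a \<in> insert n S" "b \<in> insert n S" "b < a"
  show "a - b \<notin> {1, 3, 4}"
  proof (cases "a = n")
    case True
    then show ?thesis using ab assms(2,3) by auto
  next
    case False
    then have "a \<in> S" "b \<in> S" using ab assms(2,3) by auto
    then show ?thesis using assms(1) ab(3) unfolding FQ_legal_iff by blast
  qed
next
  show "\<not> {1, 3} \<subseteq> insert n S" using assms unfolding FQ_legal_iff by auto
qed

lemma FQ_legal_sum_less:
  "FQ_legal S \<Longrightarrow> S \<subseteq> {1..a} \<Longrightarrow> sum quilt S < quilt (a + 3)"
proof (induction a arbitrary: S rule: less_induct)
  case (less a)
  have "finite S" using less.prems(2) finite_subset by blast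
  show ?case
  proof (cases "S = {}")
    case True
    then show ?thesis using quilt_pos[of "a + 3"] by simp
  next
    case False
    define l where "l = Max S"
    define T where "T = S - {l}"
    have l: "S \<subseteq> {1..l}" "l \<in> S" "l \<le> a"
      using Max_in[OF \<open>finite S\<close> False] Max_ge[OF \<open>finite S\<close>] less.prems(2)
      unfolding l_def by auto
    have legal_T: "FQ_legal T" using less.prems(1) FQ_legal_subset unfolding T_def by blast
    have "sum quilt T < quilt (l + 1)"
    proof (cases "l - 2 \<in> S")
      case True
      then have "l \<ge> 3" using l(1) by fastforce
      then show ?thesis
        using less.IH[of "l - 2" T] FQ_legal_remove_Max(1)[OF less.prems(1) l(1,2)] l legal_T
        unfolding T_def by simp
    next
      case False
      have T_sub: "T \<subseteq> {1..l - 5}"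
        using FQ_legal_remove_Max(2)[OF less.prems(1) l(1,2) False] unfolding T_def .
      show ?thesis
      proof (cases "T = {}")
        case False
        then have "l \<ge> 6" using T_sub by fastforce
        then have "sum quilt T < quilt (l - 2)" using less.IH[OF _ legal_T T_sub] l(3) by simp
        also have "\<dots> \<le> quilt (l + 1)" by simp
        finally show ?thesis .
      qed (simp add: quilt_pos)
    qed
    moreover have "sum quilt S = quilt l + sum quilt T"
      using sum.remove[OF \<open>finite S\<close> l(2)] unfolding T_def .
    moreover have "quilt l + quilt (l + 1) \<le> quilt (l + 3)"
      using quilt_add3_ge[of l] l(1,2) by auto
    moreover have "quilt (l + 3) \<le> quilt (a + 3)" using l(3) by simp
    ultimately show ?thesis by linarith
  qed
qed

lemma FQ_legal_sum_neq_quilt_small: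
  assumes "FQ_legal S" "S \<subseteq> {1..l}" "l \<in> S" "l \<le> 5"
  shows "sum quilt S \<noteq> quilt (l + 1)" and "sum quilt S \<noteq> quilt (l + 2)"
proof -
  have "S - {l} \<subseteq> {l - 2}" using FQ_legal_gap[OF assms(1,3)] assms(2,4) by fastforce
  then have "S = {l} \<or> (l \<ge> 3 \<and> S = {l - 2, l})" using assms(2,3) by fastforce
  moreover have "l \<noteq> 3 \<or> S \<noteq> {l - 2, l}" using assms(1) unfolding FQ_legal_iff by auto
  moreover have "l \<in> {1, 2, 3, 4, 5}" using assms(2-4) by auto
  ultimately show "sum quilt S \<noteq> quilt (l + 1)" "sum quilt S \<noteq> quilt (l + 2)"
    by (auto simp: quilt_values)
qed

lemma FQ_legal_sum_neq_quilt:
  "FQ_legal S \<Longrightarrow> S \<subseteq> {1..a} \<Longrightarrow> a < b \<Longrightarrow> sum quilt S \<noteq> quilt b"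
proof (induction b arbitrary: S a rule: less_induct)
  case (less b)
  have "finite S" using less.prems(2) finite_subset by blast
  show ?case
  proof (cases "S = {}")
    case True
    then show ?thesis using quilt_pos[of b] less.prems(3) by simp
  next
    case False
    define l where "l = Max S"
    define T where "T = S - {l}"
    have l: "S \<subseteq> {1..l}" "l \<in> S" "l < b"
      using Max_in[OF \<open>finite S\<close> False] Max_ge[OF \<open>finite S\<close>] less.prems(2,3)
      unfolding l_def by fastforce+
    have legal_T: "FQ_legal T" using less.prems(1) FQ_legal_subset unfolding T_def by blast
    have sum_S: "sum quilt S = quilt l + sum quilt T"
      using sum.remove[OF \<open>finite S\<close> l(2)] unfolding T_def .
    show ?thesis
    proof
      assume eq: "sum quilt S = quilt b"
      then have "b < l + 3" using FQ_legal_sum_less[OF less.prems(1) l(1)] by simp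
      with l(3) have b: "b = l + 1 \<or> b = l + 2" by linarith
      show False
      proof (cases "l \<le> 5")
        case True
        then show False using FQ_legal_sum_neq_quilt_small[OF less.prems(1) l(1,2)] eq b by blast
      next
        case False
        \<comment> \<open>the indices below \<open>l\<close> would have to sum to \<open>q(l-1)\<close> resp. \<open>q(l-4)\<close>\<close>
        from b show False
        proof
          assume "b = l + 2"
          then have "sum quilt T = quilt (l - 1)"
            using eq sum_S quilt_add3[of "l - 1"] False by simp
          moreover have "T \<subseteq> {1..l - 2}"
            using FQ_legal_remove_Max(1)[OF less.prems(1) l(1,2)] unfolding T_def .
          moreover have "l - 1 < b" "l - 2 < l - 1" using \<open>b = l + 2\<close> False by simp_all
          ultimately show False using less.IH[of "l - 1" T "l - 2"] legal_T by blast
        next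
          assume "b = l + 1"
          then have sum_T: "sum quilt T = quilt (l - 4)"
            using eq sum_S quilt_Suc[of l] False by simp
          show False
          proof (cases "l - 2 \<in> T")
            case True
            then have "quilt (l - 2) \<le> sum quilt T"
              using \<open>finite S\<close> member_le_sum[of "l - 2" T quilt] unfolding T_def by simp
            with sum_T False show False by simp
          next
            case False
            then have "T \<subseteq> {1..l - 5}"
              using FQ_legal_remove_Max(2)[OF less.prems(1) l(1,2)] \<open>\<not> l \<le> 5\<close>
              unfolding T_def by auto
            moreover have "l - 4 < b" "l - 5 < l - 4" using \<open>b = l + 1\<close> \<open>\<not> l \<le> 5\<close> by simp_all
            ultimately show False using less.IH[of "l - 4" T "l - 5"] legal_T sum_T by blast
          qed
        qed
      qed
    qed
  qed
qed

lemma FQ_legal_sum_exists: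
  "0 < m \<Longrightarrow> m < quilt (Suc n) \<Longrightarrow>
    \<exists>S. S \<subseteq> {1..n} \<and> S \<noteq> {} \<and> FQ_legal S \<and> sum quilt S = m"
proof (induction n arbitrary: m rule: less_induct)
  case (less n)
  show ?case
  proof (cases "n \<le> 5")
    case True
    show ?thesis
    proof (cases "m = 6")
      case True
      then have "n = 5" using less.prems(2) \<open>n \<le> 5\<close> by (cases "n = 5") (auto simp: quilt_small)
      moreover have "FQ_legal {2, 4}" unfolding FQ_legal_iff by simp
      ultimately show ?thesis using \<open>m = 6\<close> by (intro exI[of _ "{2, 4}"]) (simp add: quilt_values)
    next
      case False
      have "quilt (Suc n) \<le> 7" using \<open>n \<le> 5\<close> quilt_le_iff[of "Suc n" 6] by (simp add: quilt_6)
      then have "m \<le> n" using less.prems False \<open>n \<le> 5\<close>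
        by (cases "n = 5") (auto simp: quilt_small)
      then show ?thesis using less.prems(1) FQ_legal_singleton[of m] \<open>n \<le> 5\<close>
        by (intro exI[of _ "{m}"]) (simp add: quilt_small)
    qed
  next
    case False
    show ?thesis
    proof (cases "m < quilt n")
      case True
      then obtain S where "S \<subseteq> {1..n - 1}" "S \<noteq> {}" "FQ_legal S" "sum quilt S = m"
        using less.IH[of "n - 1" m] less.prems(1) False by auto
      then show ?thesis by (intro exI[of _ S]) auto
    next
      case not_less: False
      define r where "r = m - quilt n"
      have m: "m = quilt n + r" using not_less unfolding r_def by simp
      have "Suc (n - 5) = n - 4" using False by simp
      then have r: "r < quilt (Suc (n - 5))" using less.prems(2) quilt_Suc[of n] False m by simp
      show ?thesis
      proof (cases "r = 0")
        case True
        then show ?thesis using m False FQ_legal_singleton[of n] by (intro exI[of _ "{n}"]) auto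
      next
        case False
        then obtain S where S: "S \<subseteq> {1..n - 5}" "FQ_legal S" "sum quilt S = r"
          using less.IH[OF _ _ r] \<open>\<not> n \<le> 5\<close> by auto
        have "S \<subseteq> {..n - 5}" using S(1) by auto
        then have "FQ_legal (insert n S)" using FQ_legal_insert[OF S(2)] \<open>\<not> n \<le> 5\<close> by simp
        moreover have "sum quilt (insert n S) = m"
          using S \<open>\<not> n \<le> 5\<close> m finite_subset[OF S(1)] by (subst sum.insert) auto
        moreover have "insert n S \<subseteq> {1..n}" using S(1) \<open>\<not> n \<le> 5\<close> by (auto dest!: subsetD)
        ultimately show ?thesis by (intro exI[of _ "insert n S"]) auto
      qed
    qed
  qed
qed

subsection \<open>The greedily defined sequence satisfies the recurrence\<close>

lemma length_fq_list: "length (fq_list n) = n"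
  by (induction n) (simp_all add: Let_def)

lemma FQ_representable_cong:
  assumes "\<And>l. l \<in> {1..<i} \<Longrightarrow> f l = g l"
  shows "FQ_representable f i = FQ_representable g i"
proof -
  have "sum f S = sum g S" if "S \<subseteq> {1..<i}" for S
    using assms that by (intro sum.cong) auto
  then show ?thesis unfolding FQ_representable_def by (intro ext) metis
qed

lemma FQ_representable_quilt_iff:
  "FQ_representable quilt (Suc i) m \<longleftrightarrow>
    (\<exists>S. S \<subseteq> {1..i} \<and> S \<noteq> {} \<and> FQ_legal S \<and> sum quilt S = m)"
  unfolding FQ_representable_def by (simp add: atLeastLessThanSuc_atLeastAtMost)

lemma quilt_least_unrepresentable:
  "(LEAST m. 0 < m \<and> \<not> FQ_representable quilt (Suc i) m) = quilt (Suc i)"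
proof (rule Least_equality)
  have "\<not> FQ_representable quilt (Suc i) (quilt (Suc i))"
    unfolding FQ_representable_quilt_iff using FQ_legal_sum_neq_quilt[of _ i "Suc i"] by blast
  then show "0 < quilt (Suc i) \<and> \<not> FQ_representable quilt (Suc i) (quilt (Suc i))"
    using quilt_pos[of "Suc i"] by simp
next
  fix m assume m: "0 < m \<and> \<not> FQ_representable quilt (Suc i) m"
  show "quilt (Suc i) \<le> m"
  proof (rule ccontr)
    assume "\<not> quilt (Suc i) \<le> m"
    then show False
      using m FQ_legal_sum_exists[of m i] unfolding FQ_representable_quilt_iff by auto
  qed
qed

lemma nth_fq_list: "j < n \<Longrightarrow> fq_list n ! j = quilt (Suc j)"
proof (induction n arbitrary: j)
  case (Suc i)
  define x where "x = (if i = 0 then 1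
    else (LEAST m. 0 < m \<and> \<not> FQ_representable (\<lambda>j. fq_list i ! (j - 1)) (Suc i) m))"
  have fq_list: "fq_list (Suc i) = fq_list i @ [x]" by (simp add: Let_def x_def)
  have "x = quilt (Suc i)"
  proof (cases "i = 0")
    case False
    have "FQ_representable (\<lambda>j. fq_list i ! (j - 1)) (Suc i) = FQ_representable quilt (Suc i)"
      using Suc.IH by (intro FQ_representable_cong) auto
    then show ?thesis using quilt_least_unrepresentable[of i] False x_def by simp
  qed (simp add: x_def quilt_small)
  then show ?case using Suc fq_list by (simp add: nth_append length_fq_list)
qed simp

lemma fq_eq_quilt: "fq = quilt"
  by (rule ext) (simp add: fq_def nth_fq_list quilt_small)

subsection \<open>The Greedy-6 algorithm\<close>

lemma greedy6_aux_0: "greedy6_aux f 0 = []"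
  by (cases f) simp_all

lemma greedy6_aux_quilt: "n \<ge> 1 \<Longrightarrow> greedy6_aux (Suc f) (quilt n) = [n]"
proof -
  assume "n \<ge> 1"
  then have "(THE n'. n' \<ge> 1 \<and> quilt n' = quilt n) = n" by (intro the_equality) auto
  with \<open>n \<ge> 1\<close> quilt_pos[of n] show ?thesis by (auto simp: fq_eq_quilt)
qed

lemma greedy6_aux_6: "greedy6_aux (Suc f) 6 = [4, 2]"
  using quilt_neq_6 by (simp add: fq_eq_quilt)

lemma greedy6_aux_step:
  assumes "n \<ge> 6" "0 < r" "r < quilt (n - 4)"
  shows "greedy6_aux (Suc f) (quilt n + r) = n # greedy6_aux f r"
proof -
  define m where "m = quilt n + r"
  have m: "quilt n < m" "m < quilt (Suc n)" using assms quilt_Suc[of n] unfolding m_def by simp_all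
  have not_term: "\<not> (\<exists>k\<ge>1. quilt k = m)"
  proof
    assume "\<exists>k\<ge>1. quilt k = m"
    then obtain k where "quilt k = m" by blast
    with m have "n < k" "k < Suc n" by (metis quilt_less_iff)+
    then show False by simp
  qed
  have "m \<noteq> 6" using m(1) quilt_le_iff[of 6 n] assms(1) by (simp add: quilt_6)
  moreover have "(THE l. 1 \<le> l \<and> quilt l < m \<and> m < quilt (Suc l)) = n"
  proof (rule the_equality)
    show "1 \<le> n \<and> quilt n < m \<and> m < quilt (Suc n)" using assms(1) m by simp
  next
    fix l assume "1 \<le> l \<and> quilt l < m \<and> m < quilt (Suc l)"
    then have "quilt l < quilt (Suc n)" "quilt n < quilt (Suc l)" using m by linarith+
    then show "l = n" by simp
  qed
  ultimately have "greedy6_aux (Suc f) m = n # greedy6_aux f (m - quilt n)"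
    using not_term m(1) by (auto simp: fq_eq_quilt Let_def)
  then show ?thesis unfolding m_def by simp
qed

lemma quilt_split:
  assumes "m \<ge> 7" "\<nexists>k. quilt k = m"
  obtains n r where "n \<ge> 6" "0 < r" "r < quilt (n - 4)" "m = quilt n + r"
proof -
  obtain n where n: "quilt n \<le> m" "m < quilt (Suc n)" using quilt_interval by blast
  have "n \<ge> 6"
  proof (rule ccontr)
    assume "\<not> n \<ge> 6"
    then have "quilt (Suc n) \<le> quilt 6" by simp
    with n assms(1) show False by (simp add: quilt_6)
  qed
  moreover have "quilt n \<noteq> m" using assms(2) by blast
  ultimately show ?thesis using n quilt_Suc[of n] that[of n "m - quilt n"] by simp
qed

lemma greedy6_aux_eq_greedy6: "m \<le> f \<Longrightarrow> greedy6_aux f m = greedy6 m"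
proof (induction m arbitrary: f rule: less_induct)
  case (less m)
  show ?case
  proof (cases "m = 0")
    case True
    then show ?thesis by (simp add: greedy6_def greedy6_aux_0)
  next
    case False
    then obtain f' m' where f: "f = Suc f'" and m: "m = Suc m'"
      using less.prems by (cases f; cases m) auto
    consider (quilt) k where "quilt k = m" | (six) "m = 6" | (split) "m \<ge> 7" "\<nexists>k. quilt k = m"
    proof (cases "\<exists>k. quilt k = m")
      case False
      then have "m \<ge> 6" using quilt_small[of m] by (cases "m \<le> 5") auto
      then show ?thesis using that(2,3) False by force
    qed (use that(1) in blast)
    then show ?thesis
    proof cases
      case quilt
      then have "k \<ge> 1" using False by (cases k) (auto simp: quilt_small)
      then show ?thesis using greedy6_aux_quilt[of k] quilt f m by (simp add: greedy6_def)
    next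
      case six
      then show ?thesis using greedy6_aux_6 f by (simp add: greedy6_def numeral_eq_Suc)
    next
      case split
      then obtain n r where nr: "n \<ge> 6" "0 < r" "r < quilt (n - 4)" "m = quilt n + r"
        by (rule quilt_split)
      then have "r < m" using quilt_pos[of n] by simp
      have "greedy6_aux f m = n # greedy6_aux f' r"
        unfolding f nr(4) by (rule greedy6_aux_step[OF nr(1-3)])
      also have "\<dots> = n # greedy6_aux m' r" using less.IH \<open>r < m\<close> less.prems f m by simp
      also have "\<dots> = greedy6_aux (Suc m') m"
        unfolding nr(4) by (rule greedy6_aux_step[OF nr(1-3), symmetric])
      also have "\<dots> = greedy6 m" unfolding greedy6_def by (simp only: m)
      finally show ?thesis .
    qed
  qed
qed

lemma greedy6_step:
  assumes "n \<ge> 6" "r < quilt (n - 4)"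
  shows "greedy6 (quilt n + r) = n # greedy6 r"
proof (cases "r = 0")
  case True
  have "quilt n > 0" using quilt_pos[of n] assms(1) by simp
  then show ?thesis using True greedy6_aux_quilt[of n "quilt n - 1"] assms(1)
    by (simp add: greedy6_def greedy6_aux_0)
next
  case False
  define f where "f = quilt n + r - 1"
  have f: "quilt n + r = Suc f" "r \<le> f"
    using False quilt_pos[of n] assms(1) unfolding f_def by simp_all
  have "greedy6 (quilt n + r) = n # greedy6_aux f r"
    unfolding greedy6_def f(1) using greedy6_aux_step[OF assms(1) _ assms(2)] False f(1) by simp
  then show ?thesis using greedy6_aux_eq_greedy6[OF f(2)] by simp
qed

lemma length_greedy6_small:
  "m \<le> 6 \<Longrightarrow> length (greedy6 m) = (if m = 0 then 0 else if m = 6 then 2 else 1)"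
proof -
  assume "m \<le> 6"
  then consider "m = 0" | "m = 6" | "1 \<le> m" "m \<le> 5" by linarith
  then show ?thesis
  proof cases
    case 1
    then show ?thesis by (simp add: greedy6_def greedy6_aux_0)
  next
    case 2
    then show ?thesis using greedy6_aux_6[of 5] by (simp add: greedy6_def numeral_eq_Suc)
  next
    case 3
    then show ?thesis using greedy6_aux_quilt[of m "m - 1"] by (simp add: greedy6_def quilt_small)
  qed
qed

lemma card_less_split:
  fixes a b :: nat
  assumes "a \<le> b"
  shows "card {m. m < b \<and> P m} = card {m. m < a \<and> P m} + card {r. r < b - a \<and> P (a + r)}"
proof -
  have "{m. m < b \<and> P m} = {m. m < a \<and> P m} \<union> (\<lambda>r. a + r) ` {r. r < b - a \<and> P (a + r)}"
  proof (intro equalityI subsetI)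
    fix m assume "m \<in> {m. m < b \<and> P m}"
    then show "m \<in> {m. m < a \<and> P m} \<union> (\<lambda>r. a + r) ` {r. r < b - a \<and> P (a + r)}"
      by (cases "m < a") (auto simp: image_iff intro!: exI[of _ "m - a"])
  qed (use assms in auto)
  moreover have "card ((\<lambda>r. a + r) ` {r. r < b - a \<and> P (a + r)}) = card {r. r < b - a \<and> P (a + r)}"
    by (rule card_image) simp
  moreover have "card ({m. m < a \<and> P m} \<union> (\<lambda>r. a + r) ` {r. r < b - a \<and> P (a + r)})
      = card {m. m < a \<and> P m} + card ((\<lambda>r. a + r) ` {r. r < b - a \<and> P (a + r)})"
    by (rule card_Un_disjoint) auto
  ultimately show ?thesis by simp
qed

lemma qnk_eq: "qnk n k = card {m. m < quilt (Suc n) \<and> length (greedy6 m) = k}"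
  unfolding qnk_def fq_eq_quilt ..

lemma qnk_rec: "n \<ge> 6 \<Longrightarrow> qnk n k = qnk (n - 1) k + (if k = 0 then 0 else qnk (n - 5) (k - 1))"
proof -
  assume n: "n \<ge> 6"
  then have "n - 4 = Suc (n - 5)" by simp
  then have "{r. r < quilt (n - 4) \<and> length (greedy6 (quilt n + r)) = k}
      = {r. r < quilt (Suc (n - 5)) \<and> Suc (length (greedy6 r)) = k}"
    using greedy6_step[OF n] by auto
  also have "card \<dots> = (if k = 0 then 0 else qnk (n - 5) (k - 1))"
    unfolding qnk_eq by (cases k) simp_all
  finally show ?thesis
    using card_less_split[of "quilt n" "quilt (Suc n)"] quilt_Suc[OF n] n
    unfolding qnk_eq by simp
qed

lemma qnk_small:
  "n \<le> 5 \<Longrightarrow> qnk n k = (if k = 0 then 1 else if k = 1 then n else if k = 2 \<and> n = 5 then 1 else 0)"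
proof -
  assume n: "n \<le> 5"
  define c where "c = quilt (Suc n)"
  have c: "c = (if n = 5 then 7 else Suc n)" unfolding c_def using n by (auto simp: quilt_small quilt_6)
  have "{m. m < c \<and> length (greedy6 m) = k}
      = {m. m < c \<and> (if m = 0 then 0 else if m = 6 then 2 else 1) = k}"
    using length_greedy6_small c n by (intro Collect_cong) auto
  also have "\<dots> = (if k = 0 then {0} else if k = 1 then {1..n} else if k = 2 \<and> n = 5 then {6} else {})"
    using c n by (auto split: if_splits)
  finally show ?thesis unfolding qnk_eq c_def[symmetric] by simp
qed

lemma qnk_0: "qnk n 0 = 1"
proof (induction n rule: less_induct)
  case (less n)
  then show ?case using qnk_rec[of n 0] qnk_small[of n 0] by (cases "n \<le> 5") simp_all
qed

lemma qnk_1: "qnk n 1 = n"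
proof (induction n rule: less_induct)
  case (less n)
  then show ?case using qnk_rec[of n 1] qnk_small[of n 1] qnk_0 by (cases "n \<le> 5") simp_all
qed

lemma qnk_2: "n \<ge> 6 \<Longrightarrow> real (qnk n 2) = 1 + (real n - 5) * (real n - 4) / 2"
proof (induction n rule: less_induct)
  case (less n)
  show ?case
  proof (cases "n = 6")
    case True
    then show ?thesis using qnk_rec[of 6 2] qnk_small[of 5 2] qnk_1[of 1] by simp
  next
    case False
    then have "qnk n 2 = qnk (n - 1) 2 + (n - 5)" using qnk_rec[of n 2] qnk_1 less.prems by simp
    moreover have "real (qnk (n - 1) 2) = 1 + (real n - 6) * (real n - 5) / 2"
      using less.IH[of "n - 1"] False less.prems by (simp add: of_nat_diff)
    ultimately show ?thesis using False less.prems by (simp add: of_nat_diff field_simps)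
  qed
qed

lemma qnk_eq_0: "k \<ge> 2 \<Longrightarrow> n < 5 * (k - 1) \<Longrightarrow> qnk n k = 0"
proof (induction n arbitrary: k rule: less_induct)
  case (less n)
  show ?case
  proof (cases "n \<le> 5")
    case True
    then show ?thesis using less.prems by (auto simp: qnk_small)
  next
    case False
    then have "k - 1 \<ge> 2" "n - 5 < 5 * (k - 1 - 1)" using less.prems by auto
    then have "qnk (n - 5) (k - 1) = 0" using less.IH[of "n - 5"] False by simp
    moreover have "qnk (n - 1) k = 0" using less.IH[of "n - 1" k] less.prems False by simp
    ultimately show ?thesis using qnk_rec[of n k] False by simp
  qed
qed

subsection \<open>The generating function\<close>

lemma fps_nth_H: "fps_nth (fps_nth H n) k = int (qnk n k)"
  unfolding H_def by simp

lemma H_row_rec: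
  "fps_nth H n - (if n = 0 then 0 else fps_nth H (n - 1))
      - fps_X * (if n < 5 then 0 else fps_nth H (n - 5))
    = (if n = 0 then 1 else if n \<le> 4 then fps_X else if n = 5 then fps_X ^ 2 else 0)"
  (is "?lhs = ?rhs")
proof (rule fps_ext)
  fix k
  consider "n = 0" | "1 \<le> n" "n \<le> 4" | "n = 5" | "n \<ge> 6" by linarith
  then show "fps_nth ?lhs k = fps_nth ?rhs k"
  proof cases
    case 2
    then show ?thesis using qnk_small[of n k] qnk_small[of "n - 1" k] by (auto simp: fps_nth_H)
  next
    case 4
    then show ?thesis using qnk_rec[of n k] by (simp add: fps_nth_H)
  qed (simp_all add: fps_nth_H qnk_small)
qed

lemma H_generating_function:
  "let X = (fps_X :: int fps fps); Y = fps_const (fps_X :: int fps) in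
    H * (1 - X - Y * X ^ 5) = 1 + (X + X ^ 2 + X ^ 3 + X ^ 4) * Y + X ^ 5 * Y ^ 2"
  unfolding Let_def
proof (rule fps_ext)
  fix n
  have "H * (1 - fps_X - fps_const fps_X * fps_X ^ 5)
      = H - H * fps_X - fps_const fps_X * (H * fps_X ^ 5)"
    by (simp add: algebra_simps)
  then have "fps_nth (H * (1 - fps_X - fps_const fps_X * fps_X ^ 5)) n
      = fps_nth H n - (if n = 0 then 0 else fps_nth H (n - 1))
        - fps_X * (if n < 5 then 0 else fps_nth H (n - 5))"
    by (simp add: fps_X_power_mult_right_nth)
  also have "\<dots> = (if n = 0 then 1 else if n \<le> 4 then fps_X else if n = 5 then fps_X ^ 2 else 0)"
    by (rule H_row_rec)
  also have "\<dots> = fps_nth (1 + (fps_X + fps_X ^ 2 + fps_X ^ 3 + fps_X ^ 4) * fps_const fps_X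
      + fps_X ^ 5 * fps_const fps_X ^ 2 :: int fps fps) n"
    by (simp add: fps_const_power power2_eq_square) presburger
  finally show "fps_nth (H * (1 - fps_X - fps_const fps_X * fps_X ^ 5)) n
      = fps_nth (1 + (fps_X + fps_X ^ 2 + fps_X ^ 3 + fps_X ^ 4) * fps_const fps_X
        + fps_X ^ 5 * fps_const fps_X ^ 2 :: int fps fps) n" .
qed

theorem propositionB1:
  shows "(\<forall>n. qnk n 0 = 1)
    \<and> qnk 5 2 = 1
    \<and> (\<forall>n. qnk n 1 = n)
    \<and> (\<forall>n\<ge>6. real (qnk n 2) = 1 + (real n - 5) * (real n - 4) / 2)
    \<and> (\<forall>n k. k \<ge> 3 \<and> n \<ge> 5 * (k - 1) \<longrightarrow> qnk n k = qnk (n - 5) (k - 1) + qnk (n - 1) k)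
    \<and> (\<forall>n k. k \<ge> 3 \<and> n < 5 * (k - 1) \<longrightarrow> qnk n k = 0)
    \<and> (\<forall>n\<le>4. qnk n 2 = 0)
    \<and> (let X = (fps_X :: int fps fps); Y = fps_const (fps_X :: int fps) in
         H * (1 - X - Y * X ^ 5) = 1 + (X + X ^ 2 + X ^ 3 + X ^ 4) * Y + X ^ 5 * Y ^ 2)"
proof (intro conjI allI impI)
  show "qnk n k = qnk (n - 5) (k - 1) + qnk (n - 1) k" if "k \<ge> 3 \<and> n \<ge> 5 * (k - 1)" for n k
  proof -
    have "n \<ge> 6" using that by linarith
    then show ?thesis using qnk_rec[of n k] that by simp
  qed
  show "qnk n 1 = n" for n by (rule qnk_1)
  show "let X = (fps_X :: int fps fps); Y = fps_const (fps_X :: int fps) in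
      H * (1 - X - Y * X ^ 5) = 1 + (X + X ^ 2 + X ^ 3 + X ^ 4) * Y + X ^ 5 * Y ^ 2"
    by (rule H_generating_function)
qed (simp_all add: qnk_0 qnk_2 qnk_eq_0 qnk_small)

end
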